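(* Let $\zeta\in(0,1]$, $n'\ge1$, $p_1,\dots,p_{n'}\ge 0$ and $x_1,\dots,x_{n'}\in[0,1]$. Let $\mathcal G$ be a family of pairwise disjoint nonempty subsets ("groups") of $\{1,\dots,n'\}$ such that for each $G'\in\mathcal G$: $\sum_{j\in G'}x_j\ge 1/10$, and $p_j\ge p_{j'}/10$ for all $j,j'\in G'$. Let $G=\bigcup_{G'\in\mathcal G}G'$ and $\bar G=\{1,\dots,n'\}\setminus G$. Let $X_1,\dots,X_{n'}$ be $\{0,1\}$-valued random variables with $\mathbb E[X_j]=x_j$ for all $j$, $\mathbb E[X_jX_{j'}]\le x_jx_{j'}$ for all $j\ne j'$, and $\mathbb E[X_jX_{j'}]\le(1-\zeta)x_jx_{j'}$ for all $j\ne j'$ lying in a common group $G'\in\mathcal G$. With $L=\sum_{j=1}^{n'}x_jp_j$, $Q=\sum_{j=1}^{n'}x_jp_j^2$, $\bar Q=\sum_{j\in\bar G}x_jp_j^2$, we have $$\mathbb E\Big[\sum_{j=1}^{n'}p_jX_j(p_1X_1+\dots+p_jX_j)\Big]\le\Big(1-\frac{\zeta}{200}\Big)Q+\frac{\zeta}{200}\bar Q+\frac12L^2.$$ *)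

theory Defs
  imports "HOL-Probability.Probability"
begin

end

theory Submission
  imports Defs
begin

text \<open>
  Since \<open>X\<^sub>j\<^sup>2 = X\<^sub>j\<close>, the expectation equals \<open>Q\<close> plus the sum over pairs \<open>i < j\<close> of
  \<open>p\<^sub>i p\<^sub>j E[X\<^sub>i X\<^sub>j]\<close>. This pair sum is at most \<open>\<Sum>\<^sub>i\<^sub><\<^sub>j a\<^sub>i a\<^sub>j = (L\<^sup>2 - \<Sum>\<^sub>j a\<^sub>j\<^sup>2) / 2\<close>
  with \<open>a\<^sub>j = x\<^sub>j p\<^sub>j\<close>, less a discount of \<open>\<zeta> a\<^sub>i a\<^sub>j\<close> for each pair inside a group. Within a
  group the \<open>p\<^sub>j\<close> agree up to a factor 10 and the \<open>x\<^sub>j\<close> add up to at least \<open>1/10\<close>, so the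
  group's share of \<open>Q\<close> is at most 100 times the square of its share of \<open>L\<close>; expanding that
  square, the discount pays for the gain \<open>\<zeta>/200\<close> on the grouped part of \<open>Q\<close>, while the
  diagonal terms it produces are absorbed by \<open>\<Sum>\<^sub>j a\<^sub>j\<^sup>2 / 2\<close>.
\<close>

definition increasing_pairs :: "'i::linorder set \<Rightarrow> ('i \<times> 'i) set" where
  "increasing_pairs A = {(i, j) \<in> A \<times> A. i < j}"

lemma finite_increasing_pairs [simp]: "finite A \<Longrightarrow> finite (increasing_pairs A)"
  unfolding increasing_pairs_def by (rule finite_subset[of _ "A \<times> A"]) auto

lemma increasing_pairs_mono: "A \<subseteq> B \<Longrightarrow> increasing_pairs A \<subseteq> increasing_pairs B"
  unfolding increasing_pairs_def by auto

lemma sum_increasing_pairs: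
  assumes "finite A"
  shows "(\<Sum>(i, j)\<in>increasing_pairs A. f i j) = (\<Sum>j\<in>A. \<Sum>i\<in>{i\<in>A. i < j}. f i j)"
proof -
  have "increasing_pairs A = prod.swap ` (SIGMA j:A. {i\<in>A. i < j})"
    unfolding increasing_pairs_def by force
  then show ?thesis
    using assms by (simp add: sum.reindex sum.Sigma)
qed

lemma power2_sum_increasing_pairs:
  fixes b :: "'i::linorder \<Rightarrow> 'a::comm_semiring_1"
  assumes "finite A"
  shows "(\<Sum>j\<in>A. b j)\<^sup>2 = (\<Sum>j\<in>A. (b j)\<^sup>2) + 2 * (\<Sum>(i, j)\<in>increasing_pairs A. b i * b j)"
  using assms
proof (induction A rule: finite_linorder_max_induct)
  case empty
  then show ?case by (simp add: increasing_pairs_def)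
next
  case (insert m A)
  have "increasing_pairs (insert m A) = increasing_pairs A \<union> (\<lambda>i. (i, m)) ` A"
    using insert.hyps unfolding increasing_pairs_def by auto
  moreover have "increasing_pairs A \<inter> (\<lambda>i. (i, m)) ` A = {}"
    using insert.hyps unfolding increasing_pairs_def by auto
  ultimately have "(\<Sum>(i, j)\<in>increasing_pairs (insert m A). b i * b j)
      = (\<Sum>(i, j)\<in>increasing_pairs A. b i * b j) + (\<Sum>i\<in>A. b i) * b m"
    using insert.hyps by (simp add: sum.union_disjoint sum.reindex inj_on_def sum_distrib_right)
  moreover have "m \<notin> A" using insert.hyps by auto
  ultimately show ?case
    using insert.hyps insert.IH by (simp add: power2_eq_square algebra_simps mult_2_right)
qed

lemma sum_times_partial_sum:
  fixes b :: "'i::linorder \<Rightarrow> 'a::comm_semiring_1"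
  assumes "finite A"
  shows "(\<Sum>j\<in>A. b j * (\<Sum>i\<in>{i\<in>A. i \<le> j}. b i))
    = (\<Sum>j\<in>A. (b j)\<^sup>2) + (\<Sum>(i, j)\<in>increasing_pairs A. b i * b j)"
proof -
  have "b j * (\<Sum>i\<in>{i\<in>A. i \<le> j}. b i) = (b j)\<^sup>2 + (\<Sum>i\<in>{i\<in>A. i < j}. b i * b j)"
    if "j \<in> A" for j
  proof -
    have "{i\<in>A. i \<le> j} = insert j {i\<in>A. i < j}" using that by auto
    then show ?thesis
      using assms by (simp add: power2_eq_square distrib_left sum_distrib_left mult.commute)
  qed
  then show ?thesis
    using assms by (simp add: sum_increasing_pairs sum.distrib)
qed

lemma sum_weighted_squares_le_square:
  fixes x p :: "'i \<Rightarrow> real"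
  assumes "finite G" "G \<noteq> {}" "0 \<le> c" "0 \<le> \<delta>"
    and "\<And>j. j \<in> G \<Longrightarrow> 0 \<le> x j" "\<And>j. j \<in> G \<Longrightarrow> 0 \<le> p j"
    and "c \<le> (\<Sum>j\<in>G. x j)"
    and "\<And>j j'. j \<in> G \<Longrightarrow> j' \<in> G \<Longrightarrow> \<delta> * p j' \<le> p j"
  shows "c * \<delta> * (\<Sum>j\<in>G. x j * (p j)\<^sup>2) \<le> (\<Sum>j\<in>G. x j * p j)\<^sup>2"
proof -
  define m where "m = Max (p ` G)"
  define s where "s = (\<Sum>j\<in>G. x j * p j)"
  have p_le_m: "p j \<le> m" if "j \<in> G" for j
    unfolding m_def using assms(1) that by auto
  have "m \<in> p ` G"
    unfolding m_def using assms(1,2) by simp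
  then obtain k where "k \<in> G" "p k = m" by auto
  then have "0 \<le> m" and m_le_p: "\<And>j. j \<in> G \<Longrightarrow> \<delta> * m \<le> p j"
    using assms(6,8) by auto
  have "c * (\<delta> * m) \<le> (\<Sum>j\<in>G. x j) * (\<delta> * m)"
    using assms(4,7) \<open>0 \<le> m\<close> by (intro mult_right_mono) auto
  also have "\<dots> \<le> s"
    unfolding s_def sum_distrib_right using assms(5) m_le_p by (intro sum_mono mult_left_mono) auto
  finally have cm_le_s: "c * \<delta> * m \<le> s" by (simp add: mult.assoc)
  have "(\<Sum>j\<in>G. x j * (p j)\<^sup>2) \<le> m * s"
    unfolding s_def sum_distrib_left power2_eq_square
    using assms(5,6) p_le_m by (intro sum_mono) (simp add: mult_right_mono mult.left_commute)
  then have "c * \<delta> * (\<Sum>j\<in>G. x j * (p j)\<^sup>2) \<le> c * \<delta> * m * s"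
    using assms(3,4) by (simp add: mult_left_mono mult.assoc)
  also have "\<dots> \<le> s * s"
    using cm_le_s assms(5,6) unfolding s_def by (intro mult_right_mono sum_nonneg) auto
  finally show ?thesis unfolding s_def by (simp add: power2_eq_square)
qed

lemma sum_increasing_pairs_le_with_groups:
  fixes f g :: "'i::linorder \<Rightarrow> 'i \<Rightarrow> real" and \<G> :: "'i set set"
  assumes "finite S" "\<And>G. G \<in> \<G> \<Longrightarrow> G \<subseteq> S" "disjoint \<G>"
    and "\<And>i j. (i, j) \<in> increasing_pairs S \<Longrightarrow> f i j \<le> g i j"
    and "\<And>G i j. G \<in> \<G> \<Longrightarrow> (i, j) \<in> increasing_pairs G \<Longrightarrow> f i j \<le> (1 - \<zeta>) * g i j"
  shows "(\<Sum>(i, j)\<in>increasing_pairs S. f i j)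
    \<le> (\<Sum>(i, j)\<in>increasing_pairs S. g i j) - \<zeta> * (\<Sum>G\<in>\<G>. \<Sum>(i, j)\<in>increasing_pairs G. g i j)"
proof -
  define W where "W = (\<Union>G\<in>\<G>. increasing_pairs G)"
  have "finite \<G>"
    using assms(1,2) by (meson Pow_iff finite_Pow_iff finite_subset subsetI)
  have W_sub: "W \<subseteq> increasing_pairs S"
    unfolding W_def using assms(2) increasing_pairs_mono by blast
  have fin: "finite (increasing_pairs S)" using assms(1) by simp
  have sum_W: "(\<Sum>(i, j)\<in>W. h i j) = (\<Sum>G\<in>\<G>. \<Sum>(i, j)\<in>increasing_pairs G. h i j)" for h
    unfolding W_def
  proof (rule sum.UNION_disjoint[OF \<open>finite \<G>\<close>])
    show "\<forall>G\<in>\<G>. finite (increasing_pairs G)"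
      using assms(1,2) by (auto intro!: finite_increasing_pairs intro: finite_subset)
    show "\<forall>G\<in>\<G>. \<forall>G'\<in>\<G>. G \<noteq> G' \<longrightarrow> increasing_pairs G \<inter> increasing_pairs G' = {}"
      using assms(3) unfolding disjoint_def increasing_pairs_def by blast
  qed
  have "(\<Sum>(i, j)\<in>increasing_pairs S. f i j)
      = (\<Sum>(i, j)\<in>W. f i j) + (\<Sum>(i, j)\<in>increasing_pairs S - W. f i j)"
    using sum.subset_diff[OF W_sub fin] by (simp add: add.commute)
  also have "\<dots> \<le> (\<Sum>(i, j)\<in>W. (1 - \<zeta>) * g i j) + (\<Sum>(i, j)\<in>increasing_pairs S - W. g i j)"
    using W_sub by (intro add_mono sum_mono) (auto simp: W_def intro: assms(4,5))
  also have "\<dots> = (\<Sum>(i, j)\<in>increasing_pairs S. g i j) - \<zeta> * (\<Sum>(i, j)\<in>W. g i j)"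
    using sum.subset_diff[OF W_sub fin, of "\<lambda>(i, j). g i j"]
    by (simp add: case_prod_unfold sum_distrib_left sum_subtractf left_diff_distrib)
  finally show ?thesis unfolding sum_W .
qed

lemma sum_Union_weighted_squares_le:
  fixes x p :: "'i::linorder \<Rightarrow> real" and \<G> :: "'i set set"
  assumes "finite (\<Union>\<G>)" "disjoint \<G>" "{} \<notin> \<G>" "0 \<le> c" "0 \<le> \<delta>"
    and "\<And>j. j \<in> \<Union>\<G> \<Longrightarrow> 0 \<le> x j" "\<And>j. j \<in> \<Union>\<G> \<Longrightarrow> 0 \<le> p j"
    and "\<And>G. G \<in> \<G> \<Longrightarrow> c \<le> (\<Sum>j\<in>G. x j)"
    and "\<And>G j j'. G \<in> \<G> \<Longrightarrow> j \<in> G \<Longrightarrow> j' \<in> G \<Longrightarrow> \<delta> * p j' \<le> p j"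
  shows "c * \<delta> * (\<Sum>j\<in>\<Union>\<G>. x j * (p j)\<^sup>2)
    \<le> (\<Sum>j\<in>\<Union>\<G>. (x j * p j)\<^sup>2)
      + 2 * (\<Sum>G\<in>\<G>. \<Sum>(i, j)\<in>increasing_pairs G. (x i * p i) * (x j * p j))"
proof -
  have fin: "\<forall>G\<in>\<G>. finite G"
    using assms(1) by (meson Union_upper finite_subset)
  have disj: "\<forall>G\<in>\<G>. \<forall>G'\<in>\<G>. G \<noteq> G' \<longrightarrow> G \<inter> G' = {}"
    using assms(2) unfolding disjoint_def by blast
  have "c * \<delta> * (\<Sum>j\<in>G. x j * (p j)\<^sup>2)
      \<le> (\<Sum>j\<in>G. (x j * p j)\<^sup>2) + 2 * (\<Sum>(i, j)\<in>increasing_pairs G. (x i * p i) * (x j * p j))"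
    if "G \<in> \<G>" for G
  proof -
    have "c * \<delta> * (\<Sum>j\<in>G. x j * (p j)\<^sup>2) \<le> (\<Sum>j\<in>G. x j * p j)\<^sup>2"
      using that fin assms(3-9) by (intro sum_weighted_squares_le_square) auto
    also have "\<dots> = (\<Sum>j\<in>G. (x j * p j)\<^sup>2)
        + 2 * (\<Sum>(i, j)\<in>increasing_pairs G. (x i * p i) * (x j * p j))"
      using that fin by (intro power2_sum_increasing_pairs) auto
    finally show ?thesis .
  qed
  then have "c * \<delta> * (\<Sum>G\<in>\<G>. \<Sum>j\<in>G. x j * (p j)\<^sup>2)
      \<le> (\<Sum>G\<in>\<G>. \<Sum>j\<in>G. (x j * p j)\<^sup>2)
        + 2 * (\<Sum>G\<in>\<G>. \<Sum>(i, j)\<in>increasing_pairs G. (x i * p i) * (x j * p j))"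
    by (simp add: sum_distrib_left sum.distrib[symmetric] sum_mono)
  then show ?thesis
    by (simp add: sum.Union_disjoint[OF fin disj])
qed

lemma (in prob_space) expectation_sum_times_partial_sum:
  fixes X :: "'i::linorder \<Rightarrow> 'a \<Rightarrow> real"
  assumes "finite A" "\<And>j. j \<in> A \<Longrightarrow> X j \<in> borel_measurable M"
    and "\<And>j \<omega>. j \<in> A \<Longrightarrow> \<omega> \<in> space M \<Longrightarrow> X j \<omega> \<in> {0, 1}"
  shows "expectation (\<lambda>\<omega>. \<Sum>j\<in>A. p j * X j \<omega> * (\<Sum>i\<in>{i\<in>A. i \<le> j}. p i * X i \<omega>))
    = (\<Sum>j\<in>A. (p j)\<^sup>2 * expectation (X j))
      + (\<Sum>(i, j)\<in>increasing_pairs A. p i * p j * expectation (\<lambda>\<omega>. X i \<omega> * X j \<omega>))"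
proof -
  have bounded: "\<bar>X j \<omega>\<bar> \<le> 1" if "j \<in> A" "\<omega> \<in> space M" for j \<omega>
    using assms(3)[OF that] by auto
  have integrable_X: "integrable M (X j)" if "j \<in> A" for j
    using assms(2) bounded that by (intro integrable_const_bound[where B = 1] AE_I2) auto
  have integrable_prod: "integrable M (\<lambda>\<omega>. X i \<omega> * X j \<omega>)" if "i \<in> A" "j \<in> A" for i j
    using assms(2) bounded that
    by (intro integrable_const_bound[where B = 1] AE_I2) (auto simp: abs_mult intro: mult_le_one)
  have "expectation (\<lambda>\<omega>. \<Sum>j\<in>A. p j * X j \<omega> * (\<Sum>i\<in>{i\<in>A. i \<le> j}. p i * X i \<omega>))
      = expectation (\<lambda>\<omega>. (\<Sum>j\<in>A. (p j)\<^sup>2 * X j \<omega>)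
          + (\<Sum>(i, j)\<in>increasing_pairs A. p i * p j * (X i \<omega> * X j \<omega>)))"
  proof (rule Bochner_Integration.integral_cong[OF refl])
    fix \<omega> assume \<omega>: "\<omega> \<in> space M"
    have square: "(p j * X j \<omega>)\<^sup>2 = (p j)\<^sup>2 * X j \<omega>" if "j \<in> A" for j
      using assms(3)[OF that \<omega>] by (auto simp: power_mult_distrib)
    have "(\<Sum>j\<in>A. p j * X j \<omega> * (\<Sum>i\<in>{i\<in>A. i \<le> j}. p i * X i \<omega>))
        = (\<Sum>j\<in>A. (p j * X j \<omega>)\<^sup>2) + (\<Sum>(i, j)\<in>increasing_pairs A. p i * X i \<omega> * (p j * X j \<omega>))"
      by (rule sum_times_partial_sum[OF assms(1)])
    also have "\<dots> = (\<Sum>j\<in>A. (p j)\<^sup>2 * X j \<omega>)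
        + (\<Sum>(i, j)\<in>increasing_pairs A. p i * p j * (X i \<omega> * X j \<omega>))"
      by (intro arg_cong2[where f = "(+)"] sum.cong) (auto simp: square mult_ac)
    finally show "(\<Sum>j\<in>A. p j * X j \<omega> * (\<Sum>i\<in>{i\<in>A. i \<le> j}. p i * X i \<omega>))
        = (\<Sum>j\<in>A. (p j)\<^sup>2 * X j \<omega>) + (\<Sum>(i, j)\<in>increasing_pairs A. p i * p j * (X i \<omega> * X j \<omega>))" .
  qed
  also have "\<dots> = expectation (\<lambda>\<omega>. \<Sum>j\<in>A. (p j)\<^sup>2 * X j \<omega>)
      + expectation (\<lambda>\<omega>. \<Sum>(i, j)\<in>increasing_pairs A. p i * p j * (X i \<omega> * X j \<omega>))"
  proof (rule Bochner_Integration.integral_add)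
    show "integrable M (\<lambda>\<omega>. \<Sum>j\<in>A. (p j)\<^sup>2 * X j \<omega>)"
      using integrable_X by (intro Bochner_Integration.integrable_sum integrable_mult_right) auto
    show "integrable M (\<lambda>\<omega>. \<Sum>(i, j)\<in>increasing_pairs A. p i * p j * (X i \<omega> * X j \<omega>))"
      by (intro Bochner_Integration.integrable_sum)
        (auto simp: split_beta increasing_pairs_def intro!: integrable_mult_right integrable_prod)
  qed
  also have "\<dots> = (\<Sum>j\<in>A. (p j)\<^sup>2 * expectation (X j))
      + (\<Sum>(i, j)\<in>increasing_pairs A. p i * p j * expectation (\<lambda>\<omega>. X i \<omega> * X j \<omega>))"
    by (subst (1 2) Bochner_Integration.integral_sum)
      (auto simp: split_beta increasing_pairs_def intro: integrable_X integrable_prod)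
  finally show ?thesis .
qed

lemma sum_weighted_second_moments_le:
  fixes x p :: "'i::linorder \<Rightarrow> real" and e :: "'i \<Rightarrow> 'i \<Rightarrow> real" and \<G> :: "'i set set"
  assumes "finite S" "\<And>j. j \<in> S \<Longrightarrow> 0 \<le> p j"
    and "\<And>G. G \<in> \<G> \<Longrightarrow> G \<subseteq> S" "disjoint \<G>"
    and "\<And>i j. i \<in> S \<Longrightarrow> j \<in> S \<Longrightarrow> i \<noteq> j \<Longrightarrow> e i j \<le> x i * x j"
    and "\<And>G i j. G \<in> \<G> \<Longrightarrow> i \<in> G \<Longrightarrow> j \<in> G \<Longrightarrow> i \<noteq> j \<Longrightarrow> e i j \<le> (1 - \<zeta>) * x i * x j"
  shows "(\<Sum>(i, j)\<in>increasing_pairs S. p i * p j * e i j)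
    \<le> (\<Sum>(i, j)\<in>increasing_pairs S. x i * p i * (x j * p j))
      - \<zeta> * (\<Sum>G\<in>\<G>. \<Sum>(i, j)\<in>increasing_pairs G. x i * p i * (x j * p j))"
proof (rule sum_increasing_pairs_le_with_groups[OF assms(1,3,4)])
  have pp: "0 \<le> p i * p j" if "i \<in> S" "j \<in> S" for i j
    using assms(2) that by simp
  show "p i * p j * e i j \<le> x i * p i * (x j * p j)" if "(i, j) \<in> increasing_pairs S" for i j
    using that assms(5) pp mult_left_mono[of "e i j" "x i * x j" "p i * p j"]
    unfolding increasing_pairs_def by (auto simp: ac_simps)
  show "p i * p j * e i j \<le> (1 - \<zeta>) * (x i * p i * (x j * p j))"
    if "G \<in> \<G>" "(i, j) \<in> increasing_pairs G" for G i j
  proof -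
    have "i \<in> G" "j \<in> G" "i \<noteq> j" using that(2) unfolding increasing_pairs_def by auto
    moreover have "0 \<le> p i * p j"
      using pp assms(3) that(1) \<open>i \<in> G\<close> \<open>j \<in> G\<close> by blast
    ultimately have "p i * p j * e i j \<le> p i * p j * ((1 - \<zeta>) * x i * x j)"
      using assms(6) that(1) by (intro mult_left_mono) auto
    then show ?thesis by (simp add: ac_simps)
  qed
qed

lemma grouped_quadratic_form_le:
  fixes x p :: "'i::linorder \<Rightarrow> real" and e :: "'i \<Rightarrow> 'i \<Rightarrow> real" and \<G> :: "'i set set"
  assumes "finite S" "0 \<le> \<zeta>" "\<zeta> \<le> 1"
    and "\<And>j. j \<in> S \<Longrightarrow> 0 \<le> x j" "\<And>j. j \<in> S \<Longrightarrow> 0 \<le> p j"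
    and "\<And>G. G \<in> \<G> \<Longrightarrow> G \<subseteq> S" "disjoint \<G>" "{} \<notin> \<G>"
    and "\<And>G. G \<in> \<G> \<Longrightarrow> 1/10 \<le> (\<Sum>j\<in>G. x j)"
    and "\<And>G j j'. G \<in> \<G> \<Longrightarrow> j \<in> G \<Longrightarrow> j' \<in> G \<Longrightarrow> p j' / 10 \<le> p j"
    and "\<And>i j. i \<in> S \<Longrightarrow> j \<in> S \<Longrightarrow> i \<noteq> j \<Longrightarrow> e i j \<le> x i * x j"
    and "\<And>G i j. G \<in> \<G> \<Longrightarrow> i \<in> G \<Longrightarrow> j \<in> G \<Longrightarrow> i \<noteq> j \<Longrightarrow> e i j \<le> (1 - \<zeta>) * x i * x j"
  shows "(\<Sum>j\<in>S. x j * (p j)\<^sup>2) + (\<Sum>(i, j)\<in>increasing_pairs S. p i * p j * e i j)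
    \<le> (1 - \<zeta> / 200) * (\<Sum>j\<in>S. x j * (p j)\<^sup>2) + \<zeta> / 200 * (\<Sum>j\<in>S - \<Union>\<G>. x j * (p j)\<^sup>2)
      + 1/2 * (\<Sum>j\<in>S. x j * p j)\<^sup>2"
proof -
  define a where "a j = x j * p j" for j
  define W where "W = (\<Sum>G\<in>\<G>. \<Sum>(i, j)\<in>increasing_pairs G. a i * a j)"
  have "\<Union>\<G> \<subseteq> S" using assms(6) by blast
  have "(\<Sum>(i, j)\<in>increasing_pairs S. p i * p j * e i j)
      \<le> (\<Sum>(i, j)\<in>increasing_pairs S. a i * a j) - \<zeta> * W"
    unfolding W_def a_def using assms(1,5-7,11,12) by (rule sum_weighted_second_moments_le)
  moreover have "1/10 * (1/10) * (\<Sum>j\<in>\<Union>\<G>. x j * (p j)\<^sup>2) \<le> (\<Sum>j\<in>\<Union>\<G>. (a j)\<^sup>2) + 2 * W"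
    unfolding W_def a_def
  proof (rule sum_Union_weighted_squares_le[OF _ assms(7,8)])
    show "finite (\<Union>\<G>)" using assms(1) \<open>\<Union>\<G> \<subseteq> S\<close> by (rule finite_subset[rotated])
    show "0 \<le> x j" "0 \<le> p j" if "j \<in> \<Union>\<G>" for j
      using that \<open>\<Union>\<G> \<subseteq> S\<close> assms(4,5) by auto
  qed (use assms(9,10) in auto)
  then have "\<zeta> * (\<Sum>j\<in>\<Union>\<G>. x j * (p j)\<^sup>2) \<le> 100 * (\<zeta> * (\<Sum>j\<in>\<Union>\<G>. (a j)\<^sup>2)) + 200 * (\<zeta> * W)"
    using assms(2) mult_left_mono[of _ _ \<zeta>] by (fastforce simp: algebra_simps)
  moreover have "\<zeta> * (\<Sum>j\<in>\<Union>\<G>. (a j)\<^sup>2) \<le> (\<Sum>j\<in>S. (a j)\<^sup>2)"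
  proof -
    have "\<zeta> * (\<Sum>j\<in>\<Union>\<G>. (a j)\<^sup>2) \<le> (\<Sum>j\<in>\<Union>\<G>. (a j)\<^sup>2)"
      using assms(2,3) by (intro mult_left_le_one_le sum_nonneg) auto
    also have "\<dots> \<le> (\<Sum>j\<in>S. (a j)\<^sup>2)"
      using assms(1) \<open>\<Union>\<G> \<subseteq> S\<close> by (intro sum_mono2) auto
    finally show ?thesis .
  qed
  moreover have "(\<Sum>j\<in>S. a j)\<^sup>2 = (\<Sum>j\<in>S. (a j)\<^sup>2) + 2 * (\<Sum>(i, j)\<in>increasing_pairs S. a i * a j)"
    using assms(1) by (rule power2_sum_increasing_pairs)
  moreover have "(\<Sum>j\<in>S. x j * (p j)\<^sup>2)
      = (\<Sum>j\<in>S - \<Union>\<G>. x j * (p j)\<^sup>2) + (\<Sum>j\<in>\<Union>\<G>. x j * (p j)\<^sup>2)"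
    using sum.subset_diff[OF \<open>\<Union>\<G> \<subseteq> S\<close> assms(1)] by simp
  ultimately show ?thesis
    unfolding a_def by (simp add: algebra_simps)
qed

theorem lemma3:
  fixes M :: "'a measure" and X :: "nat \<Rightarrow> 'a \<Rightarrow> real"
    and \<zeta> :: real and n' :: nat and p x :: "nat \<Rightarrow> real" and \<G> :: "nat set set"
  assumes "prob_space M"
    and "0 < \<zeta>" "\<zeta> \<le> 1" "1 \<le> n'"
    and "\<And>j. j \<in> {1..n'} \<Longrightarrow> p j \<ge> 0"
    and "\<And>j. j \<in> {1..n'} \<Longrightarrow> 0 \<le> x j \<and> x j \<le> 1"
    and "\<And>G'. G' \<in> \<G> \<Longrightarrow> G' \<subseteq> {1..n'} \<and> G' \<noteq> {}"
    and "\<And>G1 G2. G1 \<in> \<G> \<Longrightarrow> G2 \<in> \<G> \<Longrightarrow> G1 \<noteq> G2 \<Longrightarrow> G1 \<inter> G2 = {}"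
    and "\<And>G'. G' \<in> \<G> \<Longrightarrow> (\<Sum>j\<in>G'. x j) \<ge> 1/10"
    and "\<And>G' j j'. G' \<in> \<G> \<Longrightarrow> j \<in> G' \<Longrightarrow> j' \<in> G' \<Longrightarrow> p j \<ge> p j' / 10"
    and "\<And>j. j \<in> {1..n'} \<Longrightarrow> X j \<in> borel_measurable M"
    and "\<And>j \<omega>. j \<in> {1..n'} \<Longrightarrow> \<omega> \<in> space M \<Longrightarrow> X j \<omega> \<in> {0, 1}"
    and "\<And>j. j \<in> {1..n'} \<Longrightarrow> prob_space.expectation M (X j) = x j"
    and "\<And>j j'. j \<in> {1..n'} \<Longrightarrow> j' \<in> {1..n'} \<Longrightarrow> j \<noteq> j' \<Longrightarrow>
           prob_space.expectation M (\<lambda>\<omega>. X j \<omega> * X j' \<omega>) \<le> x j * x j'"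
    and "\<And>G' j j'. G' \<in> \<G> \<Longrightarrow> j \<in> G' \<Longrightarrow> j' \<in> G' \<Longrightarrow> j \<noteq> j' \<Longrightarrow>
           prob_space.expectation M (\<lambda>\<omega>. X j \<omega> * X j' \<omega>) \<le> (1 - \<zeta>) * x j * x j'"
  shows "prob_space.expectation M
           (\<lambda>\<omega>. \<Sum>j=1..n'. p j * X j \<omega> * (\<Sum>i=1..j. p i * X i \<omega>))
         \<le> (1 - \<zeta> / 200) * (\<Sum>j=1..n'. x j * (p j)\<^sup>2)
           + \<zeta> / 200 * (\<Sum>j\<in>{1..n'} - \<Union>\<G>. x j * (p j)\<^sup>2)
           + 1/2 * (\<Sum>j=1..n'. x j * p j)\<^sup>2"
proof -
  interpret prob_space M by (rule assms(1))
  define S where "S = {1..n'}"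
  have lower_segment: "{1..j} = {i\<in>S. i \<le> j}" if "j \<in> S" for j
    using that unfolding S_def by auto
  have "expectation (\<lambda>\<omega>. \<Sum>j=1..n'. p j * X j \<omega> * (\<Sum>i=1..j. p i * X i \<omega>))
      = (\<Sum>j\<in>S. x j * (p j)\<^sup>2)
        + (\<Sum>(i, j)\<in>increasing_pairs S. p i * p j * expectation (\<lambda>\<omega>. X i \<omega> * X j \<omega>))"
    using expectation_sum_times_partial_sum[of S X p] assms(11-13) lower_segment
    unfolding S_def by (simp add: mult.commute)
  also have "\<dots> \<le> (1 - \<zeta> / 200) * (\<Sum>j\<in>S. x j * (p j)\<^sup>2)
      + \<zeta> / 200 * (\<Sum>j\<in>S - \<Union>\<G>. x j * (p j)\<^sup>2) + 1/2 * (\<Sum>j\<in>S. x j * p j)\<^sup>2"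
  proof (rule grouped_quadratic_form_le)
    show "disjoint \<G>" using assms(8) by (intro disjointI) blast
    show "{} \<notin> \<G>" using assms(7) by blast
  qed (use assms(2-7,9,10,14,15) in \<open>auto simp: S_def\<close>)
  finally show ?thesis unfolding S_def .
qed

end
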